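(* Let $T\in\mathbb{N}$, $\Delta t>0$, $r\in\mathbb{R}$, $\mu\in\mathbb{R}$, $\sigma>0$, $S_0>0$, $B>0$ and $K\in\mathbb{R}$. Let $S_0$ be deterministic and $$S_{j+1}=S_j\exp\Big(\big(\mu-\tfrac{\sigma^2}{2}\big)\Delta t+\sigma\sqrt{\Delta t}\,Z_j\Big),\qquad j=0,\dots,T-1,$$ with $Z_0,\dots,Z_{T-1}$ independent standard normal random variables. Let $q(x)=(x-K)^+$ and let the knock-up-out barrier call payoff be $$V(S_1,\dots,S_T)=\begin{cases} q(S_T) & \text{if } \max_{j=1,\dots,T}S_j\le B,\\ 0&\text{otherwise,}\end{cases}$$ with present value $PV_{t_0}(S_0)=e^{-rT\Delta t}\,\mathbb{E}\big(V(S_1,\dots,S_T)\big)$. For $u=(u^{(1)},\dots,u^{(T)})\in[0,1]^T$ define recursively $S_0(u)=S_0$ and, for $t=0,\dots,T-1$, $$p_t=\Phi\left(\frac{\log\big(B/S_t(u)\big)-\big(\mu-\frac{\sigma^2}{2}\big)\Delta t}{\sigma\sqrt{\Delta t}}\right),\qquad S_{t+1}(u)=S_t(u)\exp\Big(\big(\mu-\tfrac{\sigma^2}{2}\big)\Delta t+\sigma\sqrt{\Delta t}\,\Phi^{-1}\big(p_t\,u^{(t+1)}\big)\Big).$$ Then $$PV_{t_0}(S_0)=e^{-rT\Delta t}\int_0^1\cdots\int_0^1 p_0\cdots p_{T-1}\; q\big(S_T(u)\big)\,\mathrm{d}u^{(T)}\cdots\mathrm{d}u^{(1)}.$$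
   Context: $\Phi$ denotes the standard normal cumulative distribution function and $\Phi^{-1}$ its inverse. The observation dates $t_0<t_1<\dots<t_T$ are equidistant with spacing $\Delta t$, so $t_T-t_0=T\Delta t$; $\mu=r-b$ where $r$ is the risk-free rate and $b$ the dividend yield. Note $p_t$ depends on $u^{(1)},\dots,u^{(t)}$ through $S_t(u)$, and $S_T(u)$ depends on all of $u$. *)

theory Defs
  imports "HOL-Probability.Probability"
begin

definition Phi :: "real \<Rightarrow> real" where
  "Phi x = set_lebesgue_integral lborel {..x} std_normal_density"

definition Phi_inv :: "real \<Rightarrow> real" where
  "Phi_inv p = inv_into UNIV Phi p"

definition q_call :: "real \<Rightarrow> real \<Rightarrow> real" where
  "q_call K x = max (x - K) 0"

definition drift :: "real \<Rightarrow> real \<Rightarrow> real \<Rightarrow> real" where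
  "drift mu sig dt = (mu - sig\<^sup>2 / 2) * dt"

fun Spath :: "real \<Rightarrow> real \<Rightarrow> real \<Rightarrow> real \<Rightarrow> (nat \<Rightarrow> real) \<Rightarrow> nat \<Rightarrow> real" where
  "Spath S0 mu sig dt z 0 = S0"
| "Spath S0 mu sig dt z (Suc j) =
     Spath S0 mu sig dt z j * exp (drift mu sig dt + sig * sqrt dt * z j)"

definition barrier_payoff :: "real \<Rightarrow> real \<Rightarrow> nat \<Rightarrow> (nat \<Rightarrow> real) \<Rightarrow> real" where
  "barrier_payoff K B T S = (if (\<forall>j\<in>{1..T}. S j \<le> B) then q_call K (S T) else 0)"

text \<open>Conditional probability of staying below the barrier in one step, from level s.\<close>
definition pstep :: "real \<Rightarrow> real \<Rightarrow> real \<Rightarrow> real \<Rightarrow> real \<Rightarrow> real" where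
  "pstep B mu sig dt s = Phi ((ln (B / s) - drift mu sig dt) / (sig * sqrt dt))"

fun Su :: "real \<Rightarrow> real \<Rightarrow> real \<Rightarrow> real \<Rightarrow> real \<Rightarrow> (nat \<Rightarrow> real) \<Rightarrow> nat \<Rightarrow> real" where
  "Su S0 B mu sig dt u 0 = S0"
| "Su S0 B mu sig dt u (Suc t) =
     Su S0 B mu sig dt u t *
       exp (drift mu sig dt + sig * sqrt dt *
            Phi_inv (pstep B mu sig dt (Su S0 B mu sig dt u t) * u (Suc t)))"

definition p_u :: "real \<Rightarrow> real \<Rightarrow> real \<Rightarrow> real \<Rightarrow> real \<Rightarrow> (nat \<Rightarrow> real) \<Rightarrow> nat \<Rightarrow> real" where
  "p_u S0 B mu sig dt u t = pstep B mu sig dt (Su S0 B mu sig dt u t)"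

end

theory Submission
  imports Defs
begin

text \<open>
  The argument conditions on survival one date at a time. For a fixed level \<open>a\<close>, the map
  \<open>u \<mapsto> Phi_inv (Phi a * u)\<close> carries the uniform distribution on \<open>[0,1]\<close>, weighted by
  \<open>Phi a\<close>, to the standard normal distribution restricted to \<open>{..a}\<close>: substitute
  \<open>p = Phi a * u\<close> and use inverse transform sampling. Choosing \<open>a\<close> so that the next price
  stays below \<open>B\<close> exactly when the normal increment is at most \<open>a\<close> gives \<open>Phi a = p_t\<close>, so
  integrating out the last coordinate of \<open>u\<close> turns the factor \<open>p_(T-1)\<close> together with
  \<open>S_T(u)\<close> into one step of the price chain killed above \<open>B\<close>. Backward induction on \<open>T\<close>
  identifies the whole integral over \<open>[0,1]^T\<close> with the expectation of the knock-out payoff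
  under the product of \<open>T\<close> standard normal laws, which by independence is the joint law of
  \<open>Z_0, ..., Z_(T-1)\<close>.
\<close>

lemma (in prob_space) distr_indep_vars_PiM_density:
  assumes indep: "indep_vars (\<lambda>_. borel) X I"
    and distr: "\<And>i. i \<in> I \<Longrightarrow> distributed M lborel (X i) f"
  shows "distr M (PiM I (\<lambda>_. borel)) (\<lambda>\<omega>. \<lambda>i\<in>I. X i \<omega>) = PiM I (\<lambda>_. density lborel f)"
proof (cases "I = {}")
  case True
  then have "(\<lambda>\<omega>. \<lambda>i\<in>I. X i \<omega>) = (\<lambda>_ _. undefined)" by (simp add: fun_eq_iff)
  with True show ?thesis
    by (intro measure_eqI) (auto simp: PiM_empty subset_singleton_iff)
next
  case False
  have rv: "random_variable borel (X i)" if "i \<in> I" for i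
    using distributed_measurable[OF distr[OF that]] by simp
  have "distr M (PiM I (\<lambda>_. borel)) (\<lambda>\<omega>. \<lambda>i\<in>I. X i \<omega>) = PiM I (\<lambda>i. distr M borel (X i))"
    using indep indep_vars_iff_distr_eq_PiM'[OF False rv] by simp
  also have "\<dots> = PiM I (\<lambda>_. density lborel f)"
    using distributed_distr_eq_density[OF distr]
    by (intro PiM_cong) (simp_all add: distr_cong[OF refl sets_lborel[symmetric]])
  finally show ?thesis .
qed

lemma (in prob_space) integral_indep_vars_PiM_density:
  fixes g :: "('i \<Rightarrow> real) \<Rightarrow> real"
  assumes "indep_vars (\<lambda>_. borel) X I" and "\<And>i. i \<in> I \<Longrightarrow> distributed M lborel (X i) f"
    and g: "g \<in> borel_measurable (PiM I (\<lambda>_. density lborel f))"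
  shows "(\<integral>\<omega>. g (\<lambda>i\<in>I. X i \<omega>) \<partial>M) = (\<integral>z. g z \<partial>PiM I (\<lambda>_. density lborel f))"
proof -
  have X: "(\<lambda>\<omega>. \<lambda>i\<in>I. X i \<omega>) \<in> measurable M (PiM I (\<lambda>_. borel))"
    using distributed_measurable[OF assms(2)] by (intro measurable_restrict) simp
  have "g \<in> borel_measurable (PiM I (\<lambda>_. borel))"
    using g by (simp cong: measurable_cong_sets sets_PiM_cong)
  from integral_distr[OF X this] show ?thesis
    by (simp add: distr_indep_vars_PiM_density[OF assms(1,2)])
qed

definition std_normal :: "real measure" where
  "std_normal = density lborel (\<lambda>x. ennreal (std_normal_density x))"

interpretation std_normal: real_distribution std_normal
  by (simp add: std_normal_def real_distribution_def real_distribution_axioms_def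
      prob_space_normal_density)

lemma emeasure_std_normal_Ioc_pos:
  assumes "x < y" shows "0 < emeasure std_normal {x<..y}"
proof -
  have "emeasure lborel {x<..y} \<noteq> 0" using assms by simp
  moreover have "std_normal_density z \<noteq> 0" for z
    using normal_density_pos[of 1 0 z] by simp
  ultimately have "\<not> (AE z in lborel. ennreal (std_normal_density z) * indicator {x<..y} z = 0)"
    by (subst (asm) AE_iff_measurable[symmetric])
      (auto simp: indicator_def)
  then show ?thesis
    by (simp add: std_normal_def emeasure_density nn_integral_0_iff_AE zero_less_iff_neq_zero)
qed

lemma Phi_eq_cdf: "Phi = cdf std_normal"
proof
  fix x
  have "Phi x = enn2real (\<integral>\<^sup>+y. ennreal (std_normal_density y) * indicator {..x} y \<partial>lborel)"
    unfolding Phi_def set_lebesgue_integral_def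
    by (subst integral_eq_nn_integral)
      (auto intro!: arg_cong[where f=enn2real] nn_integral_cong simp: indicator_def)
  then show "Phi x = cdf std_normal x"
    by (simp add: cdf_def measure_def std_normal_def emeasure_density)
qed

lemma Phi_diff: "x < y \<Longrightarrow> Phi y - Phi x = measure std_normal {x<..y}"
  unfolding Phi_eq_cdf by (rule std_normal.cdf_diff_eq)

lemma strict_mono_Phi: "strict_mono Phi"
proof
  fix x y :: real assume "x < y"
  then have "0 < measure std_normal {x<..y}"
    using emeasure_std_normal_Ioc_pos by (simp add: std_normal.emeasure_eq_measure)
  then show "Phi x < Phi y" using Phi_diff[OF \<open>x < y\<close>] by linarith
qed

lemma Phi_less_iff [simp]: "Phi x < Phi y \<longleftrightarrow> x < y"
  using strict_mono_Phi by (rule strict_mono_less)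

lemma Phi_le_iff [simp]: "Phi x \<le> Phi y \<longleftrightarrow> x \<le> y"
  using strict_mono_Phi by (rule strict_mono_less_eq)

lemma isCont_Phi: "isCont Phi x"
proof -
  have "measure std_normal {x} = 0"
    by (simp add: measure_def std_normal_def emeasure_density nn_integral_cmult_indicator
        nn_integral_indicator_singleton)
  then show ?thesis unfolding Phi_eq_cdf by (simp add: std_normal.isCont_cdf)
qed

lemma borel_measurable_Phi [measurable]: "Phi \<in> borel_measurable borel"
  by (intro borel_measurable_continuous_onI continuous_at_imp_continuous_on) (simp add: isCont_Phi)

lemma Phi_pos: "0 < Phi x"
proof -
  have "0 \<le> Phi (x - 1)" unfolding Phi_eq_cdf by (rule std_normal.cdf_nonneg)
  also have "\<dots> < Phi x" by simp
  finally show ?thesis .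
qed

lemma Phi_less_1: "Phi x < 1"
proof -
  have "Phi x < Phi (x + 1)" by simp
  also have "\<dots> \<le> 1" unfolding Phi_eq_cdf by (rule std_normal.cdf_bounded_prob)
  finally show ?thesis .
qed

lemma range_Phi: "range Phi = {0<..<1}"
proof (intro subset_antisym subsetI)
  fix p :: real assume "p \<in> {0<..<1}"
  then have "eventually (\<lambda>x. Phi x < p) at_bot" "eventually (\<lambda>x. p < Phi x) at_top"
    using std_normal.cdf_lim_at_bot std_normal.cdf_lim_at_top_prob
    by (auto simp: Phi_eq_cdf order_tendstoD)
  then obtain a b where "Phi a < p" "p < Phi b"
    by (metis eventually_at_bot_linorder eventually_at_top_linorder order_refl)
  moreover from this have "a \<le> b"
    using Phi_less_iff[of a b] by linarith
  ultimately have "\<exists>x\<ge>a. x \<le> b \<and> Phi x = p"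
    by (intro IVT) (auto simp: isCont_Phi less_imp_le)
  then show "p \<in> range Phi" by auto
qed (auto simp: Phi_pos Phi_less_1)

lemma Phi_Phi_inv: "p \<in> {0<..<1} \<Longrightarrow> Phi (Phi_inv p) = p"
  unfolding Phi_inv_def by (simp add: f_inv_into_f range_Phi)

lemma Phi_inv_le_iff: "p \<in> {0<..<1} \<Longrightarrow> Phi_inv p \<le> x \<longleftrightarrow> p \<le> Phi x"
  by (metis Phi_Phi_inv Phi_le_iff)

lemma Phi_inv_outside: "p \<notin> {0<..<1} \<Longrightarrow> Phi_inv p = (SOME x. False)"
proof -
  assume "p \<notin> {0<..<1}"
  then have "(\<lambda>x. x \<in> UNIV \<and> Phi x = p) = (\<lambda>x. False)" by (metis rangeI range_Phi)
  then show ?thesis by (simp add: Phi_inv_def inv_into_def)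
qed

lemma borel_measurable_Phi_inv [measurable]: "Phi_inv \<in> borel_measurable borel"
proof (rule borel_measurableI_le)
  fix x
  let ?S = "{0<..<1} \<inter> {..Phi x} \<union> (if (SOME x. False) \<le> x then - {0<..<1} else {})"
  have "{p \<in> space borel. Phi_inv p \<le> x} = ?S"
  proof (intro set_eqI)
    fix p show "p \<in> {p \<in> space borel. Phi_inv p \<le> x} \<longleftrightarrow> p \<in> ?S"
      by (cases "p \<in> {0<..<1}") (auto simp: Phi_inv_le_iff Phi_inv_outside)
  qed
  then show "{p \<in> space borel. Phi_inv p \<le> x} \<in> sets borel" by simp
qed

section \<open>Inverse transform sampling\<close>

abbreviation lborel_01 :: "real measure" where
  "lborel_01 \<equiv> restrict_space lborel {0..1}"

interpretation lborel_01: prob_space lborel_01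
  by (rule prob_space_restrict_space) auto

lemma measurable_Phi_inv_restrict [measurable]:
  "Phi_inv \<in> borel_measurable (restrict_space lborel A)"
  by (rule measurable_restrict_space1) simp

lemma distr_Phi_inv_restrict_lborel: "distr (restrict_space lborel {0<..<1}) borel Phi_inv = std_normal"
proof -
  have "emeasure (distr (restrict_space lborel {0<..<1}) borel Phi_inv) {x<..} = ennreal (1 - Phi x)"
    for x
  proof -
    have "Phi_inv -` {x<..} \<inter> {0<..<1} = {Phi x<..<1}"
      using Phi_pos[of x] by (auto simp: not_le[symmetric] Phi_inv_le_iff)
    moreover have "emeasure (distr (restrict_space lborel {0<..<1}) borel Phi_inv) {x<..} =
        emeasure (restrict_space lborel {0<..<1}) (Phi_inv -` {x<..} \<inter> {0<..<1})"
      by (subst emeasure_distr) auto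
    ultimately show ?thesis
      using Phi_pos[of x] Phi_less_1[of x] by (subst (asm) emeasure_restrict_space) auto
  qed
  moreover have "emeasure std_normal {x<..} = ennreal (1 - Phi x)" for x
    using std_normal.prob_compl[of "{..x}"]
    by (simp add: Compl_eq_Diff_UNIV[symmetric] std_normal.emeasure_eq_measure Phi_eq_cdf cdf_def)
  ultimately show ?thesis
    by (intro measure_eqI_lessThan) simp_all
qed

lemma nn_integral_truncated_std_normal_Phi_inv:
  assumes [measurable]: "H \<in> borel_measurable borel"
  shows "(\<integral>\<^sup>+u. ennreal (Phi a) * H (Phi_inv (Phi a * u)) \<partial>lborel_01)
       = (\<integral>\<^sup>+z. indicator {..a} z * H z \<partial>std_normal)"
proof -
  let ?f = "\<lambda>p. H (Phi_inv p) * indicator {0..Phi a} p"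
  have "(\<integral>\<^sup>+u. ennreal (Phi a) * H (Phi_inv (Phi a * u)) \<partial>lborel_01)
      = ennreal (Phi a) * (\<integral>\<^sup>+u. ?f (0 + Phi a * u) \<partial>lborel)"
    using Phi_pos[of a]
    by (subst nn_integral_restrict_space)
      (auto simp: nn_integral_cmult[symmetric] mult.assoc zero_le_mult_iff
        intro!: nn_integral_cong split: split_indicator)
  also have "\<dots> = (\<integral>\<^sup>+p. ?f p \<partial>lborel)"
    using Phi_pos[of a] by (subst nn_integral_real_affine[where c="Phi a" and t=0]) auto
  also have "\<dots> = (\<integral>\<^sup>+p. indicator {..a} (Phi_inv p) * H (Phi_inv p) * indicator {0<..<1} p \<partial>lborel)"
    using Phi_less_1[of a]
    by (intro nn_integral_cong_AE, use AE_lborel_singleton[of 0] in eventually_elim)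
      (auto simp: Phi_inv_le_iff split: split_indicator)
  also have "\<dots> = (\<integral>\<^sup>+z. indicator {..a} z * H z \<partial>distr (restrict_space lborel {0<..<1}) borel Phi_inv)"
    by (subst nn_integral_distr) (simp_all add: nn_integral_restrict_space)
  finally show ?thesis by (simp add: distr_Phi_inv_restrict_lborel)
qed

section \<open>The price chain and its killed transition\<close>

definition gbm_step :: "real \<Rightarrow> real \<Rightarrow> real \<Rightarrow> real \<Rightarrow> real \<Rightarrow> real" where
  "gbm_step mu sig dt s z = s * exp (drift mu sig dt + sig * sqrt dt * z)"

lemma borel_measurable_gbm_step [measurable (raw)]:
  assumes [measurable]: "f \<in> borel_measurable M" "g \<in> borel_measurable M"
  shows "(\<lambda>x. gbm_step mu sig dt (f x) (g x)) \<in> borel_measurable M"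
  unfolding gbm_step_def by measurable

lemma Spath_Suc_gbm_step:
  "Spath S0 mu sig dt z (Suc j) = gbm_step mu sig dt (Spath S0 mu sig dt z j) (z j)"
  by (simp add: gbm_step_def)

lemma Su_Suc_gbm_step:
  "Su S0 B mu sig dt u (Suc t) =
     gbm_step mu sig dt (Su S0 B mu sig dt u t) (Phi_inv (p_u S0 B mu sig dt u t * u (Suc t)))"
  by (simp add: gbm_step_def p_u_def)

declare Spath.simps(2) [simp del] Su.simps(2) [simp del]

lemma Spath_cong:
  "(\<And>i. i < j \<Longrightarrow> z i = z' i) \<Longrightarrow> Spath S0 mu sig dt z j = Spath S0 mu sig dt z' j"
  by (induction j) (simp_all add: Spath_Suc_gbm_step)

lemma Su_cong:
  "(\<And>i. 0 < i \<Longrightarrow> i \<le> t \<Longrightarrow> u i = u' i) \<Longrightarrow> Su S0 B mu sig dt u t = Su S0 B mu sig dt u' t"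
  by (induction t) (simp_all add: Su_Suc_gbm_step p_u_def)

lemma gbm_step_pos: "0 < s \<Longrightarrow> 0 < gbm_step mu sig dt s z"
  by (simp add: gbm_step_def)

lemma Su_pos: "0 < S0 \<Longrightarrow> 0 < Su S0 B mu sig dt u t"
  by (induction t) (simp_all add: Su_Suc_gbm_step gbm_step_pos)

lemma pstep_pos: "0 < pstep B mu sig dt s"
  by (simp add: pstep_def Phi_pos)

lemma borel_measurable_pstep [measurable]: "pstep B mu sig dt \<in> borel_measurable borel"
  unfolding pstep_def by measurable

lemma gbm_step_le_iff:
  assumes "0 < dt" "0 < sig" "0 < s" "0 < B"
  shows "gbm_step mu sig dt s z \<le> B \<longleftrightarrow> Phi z \<le> pstep B mu sig dt s"
proof -
  have "gbm_step mu sig dt s z \<le> B \<longleftrightarrow> ln s + drift mu sig dt + sig * sqrt dt * z \<le> ln B"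
    using assms by (simp add: gbm_step_def ln_le_cancel_iff[symmetric] ln_mult add.assoc
        del: ln_le_cancel_iff)
  also have "\<dots> \<longleftrightarrow> z \<le> (ln (B / s) - drift mu sig dt) / (sig * sqrt dt)"
    using assms by (simp add: ln_div field_simps)
  finally show ?thesis by (simp add: pstep_def)
qed

definition killed_transition ::
    "real \<Rightarrow> real \<Rightarrow> real \<Rightarrow> real \<Rightarrow> (real \<Rightarrow> ennreal) \<Rightarrow> real \<Rightarrow> ennreal" where
  "killed_transition B mu sig dt f s =
     (\<integral>\<^sup>+z. (if gbm_step mu sig dt s z \<le> B then f (gbm_step mu sig dt s z) else 0) \<partial>std_normal)"

lemma borel_measurable_killed_transition [measurable]:
  assumes [measurable]: "f \<in> borel_measurable borel"
  shows "killed_transition B mu sig dt f \<in> borel_measurable borel"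
  unfolding killed_transition_def by measurable

lemma nn_integral_lborel_01_eq_killed_transition:
  assumes [measurable]: "f \<in> borel_measurable borel"
    and "0 < dt" "0 < sig" "0 < s" "0 < B"
  shows "(\<integral>\<^sup>+u. ennreal (pstep B mu sig dt s) *
            f (gbm_step mu sig dt s (Phi_inv (pstep B mu sig dt s * u))) \<partial>lborel_01)
       = killed_transition B mu sig dt f s"
proof -
  define a where "a = (ln (B / s) - drift mu sig dt) / (sig * sqrt dt)"
  have "pstep B mu sig dt s = Phi a" by (simp add: pstep_def a_def)
  moreover have "gbm_step mu sig dt s z \<le> B \<longleftrightarrow> z \<in> {..a}" for z
    using gbm_step_le_iff[OF assms(2-5)] \<open>pstep B mu sig dt s = Phi a\<close> by simp
  ultimately show ?thesis
    using nn_integral_truncated_std_normal_Phi_inv[of "\<lambda>z. f (gbm_step mu sig dt s z)" a]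
    by (auto intro!: nn_integral_cong simp: indicator_def killed_transition_def)
qed

definition knock_out :: "real \<Rightarrow> nat \<Rightarrow> (nat \<Rightarrow> real) \<Rightarrow> 'b::zero \<Rightarrow> 'b" where
  "knock_out B n S x = (if \<forall>j\<in>{1..n}. S j \<le> B then x else 0)"

lemma knock_out_0 [simp]: "knock_out B 0 S x = x"
  by (simp add: knock_out_def)

lemma knock_out_Suc:
  "knock_out B (Suc n) S x = knock_out B n S (if S (Suc n) \<le> B then x else 0)"
  by (auto simp: knock_out_def atLeastAtMostSuc_conv)

lemma knock_out_cong: "(\<And>j. j \<le> n \<Longrightarrow> S j = S' j) \<Longrightarrow> knock_out B n S = knock_out B n S'"
  by (simp add: knock_out_def fun_eq_iff)

lemma nn_integral_knock_out:
  "(\<integral>\<^sup>+y. knock_out B n S (g y) \<partial>M) = knock_out B n S (\<integral>\<^sup>+y. g y \<partial>M)"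
  unfolding knock_out_def by (cases "\<forall>j\<in>{1..n}. S j \<le> B") (simp_all only: if_P if_not_P, simp)

lemma ennreal_knock_out: "ennreal (knock_out B n S x) = knock_out B n S (ennreal x)"
  by (simp add: knock_out_def)

lemma barrier_payoff_eq_knock_out: "barrier_payoff K B T S = knock_out B T S (q_call K (S T))"
  by (simp add: barrier_payoff_def knock_out_def)

section \<open>Backward induction over the observation dates\<close>

interpretation lborel_01_product: product_sigma_finite "\<lambda>_::nat. lborel_01"
  by (simp add: product_sigma_finite_def lborel_01.sigma_finite_measure)

interpretation std_normal_product: product_sigma_finite "\<lambda>_::nat. std_normal"
  by (simp add: product_sigma_finite_def std_normal.sigma_finite_measure)

lemma measurable_Spath:
  "j \<le> n \<Longrightarrow> (\<lambda>z. Spath S0 mu sig dt z j) \<in> borel_measurable (PiM {0..<n} (\<lambda>_. std_normal))"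
  by (induction j) (simp_all add: Spath_Suc_gbm_step)

lemma measurable_Su:
  "t \<le> n \<Longrightarrow> (\<lambda>u. Su S0 B mu sig dt u t) \<in> borel_measurable (PiM {1..n} (\<lambda>_. lborel_01))"
proof (induction t)
  case (Suc t)
  then have [measurable]: "(\<lambda>u. Su S0 B mu sig dt u t) \<in> borel_measurable (PiM {1..n} (\<lambda>_. lborel_01))"
    by simp
  have "(\<lambda>u. u (Suc t)) \<in> measurable (PiM {1..n} (\<lambda>_. lborel_01)) lborel_01"
    using Suc.prems by (intro measurable_component_singleton) simp
  then have [measurable]: "(\<lambda>u. u (Suc t)) \<in> borel_measurable (PiM {1..n} (\<lambda>_. lborel_01))"
    by (rule measurable_compose[where g="\<lambda>x. x"]) (simp add: measurable_restrict_space1)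
  show ?case unfolding Su_Suc_gbm_step p_u_def by measurable
qed simp

lemma borel_measurable_prod_p_u:
  "m \<le> n \<Longrightarrow> (\<lambda>u. \<Prod>t<m. p_u S0 B mu sig dt u t) \<in> borel_measurable (PiM {1..n} (\<lambda>_. lborel_01))"
  unfolding p_u_def
  by (intro borel_measurable_prod measurable_compose[OF measurable_Su borel_measurable_pstep]) simp

lemma borel_measurable_knock_out_Spath [measurable]:
  fixes g :: "(nat \<Rightarrow> real) \<Rightarrow> 'b::{zero, topological_space}"
  assumes [measurable]: "g \<in> borel_measurable (PiM {0..<n} (\<lambda>_. std_normal))"
  shows "(\<lambda>z. knock_out B n (Spath S0 mu sig dt z) (g z)) \<in> borel_measurable (PiM {0..<n} (\<lambda>_. std_normal))"
proof -
  have "Measurable.pred (PiM {0..<n} (\<lambda>_. std_normal)) (\<lambda>z. \<forall>j\<in>{1..n}. Spath S0 mu sig dt z j \<le> B)"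
  proof (intro pred_intros_finite)
    fix j :: nat assume "j \<in> {1..n}"
    then have [measurable]:
      "(\<lambda>z. Spath S0 mu sig dt z j) \<in> borel_measurable (PiM {0..<n} (\<lambda>_. std_normal))"
      by (simp add: measurable_Spath)
    show "Measurable.pred (PiM {0..<n} (\<lambda>_. std_normal)) (\<lambda>z. Spath S0 mu sig dt z j \<le> B)"
      by measurable
  qed simp
  then show ?thesis unfolding knock_out_def by measurable
qed

lemma nn_integral_Su_Suc:
  assumes "0 < dt" "0 < sig" "0 < S0" "0 < B" and [measurable]: "f \<in> borel_measurable borel"
  shows "(\<integral>\<^sup>+u. ennreal (\<Prod>t<Suc n. p_u S0 B mu sig dt u t) * f (Su S0 B mu sig dt u (Suc n))
            \<partial>PiM {1..Suc n} (\<lambda>_. lborel_01))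
       = (\<integral>\<^sup>+u. ennreal (\<Prod>t<n. p_u S0 B mu sig dt u t) *
              killed_transition B mu sig dt f (Su S0 B mu sig dt u n) \<partial>PiM {1..n} (\<lambda>_. lborel_01))"
proof -
  let ?P = "\<lambda>u. \<Prod>t<n. p_u S0 B mu sig dt u t"
  let ?p = "\<lambda>u. pstep B mu sig dt (Su S0 B mu sig dt u n)"
  have "(\<lambda>u. ennreal (\<Prod>t<Suc n. p_u S0 B mu sig dt u t) * f (Su S0 B mu sig dt u (Suc n)))
      \<in> borel_measurable (PiM {1..Suc n} (\<lambda>_. lborel_01))"
    using borel_measurable_prod_p_u[of "Suc n" "Suc n"] measurable_Su[of "Suc n" "Suc n"] by measurable
  then have meas: "(\<lambda>u. ennreal (\<Prod>t<Suc n. p_u S0 B mu sig dt u t) * f (Su S0 B mu sig dt u (Suc n)))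
      \<in> borel_measurable (PiM (insert (Suc n) {1..n}) (\<lambda>_. lborel_01))"
    by (simp add: atLeastAtMostSuc_conv insert_commute)
  have Su_upd: "Su S0 B mu sig dt (u(Suc n := y)) t = Su S0 B mu sig dt u t" if "t \<le> n" for u y t
    using that by (intro Su_cong) simp
  have "(\<integral>\<^sup>+u. ennreal (\<Prod>t<Suc n. p_u S0 B mu sig dt u t) * f (Su S0 B mu sig dt u (Suc n))
            \<partial>PiM (insert (Suc n) {1..n}) (\<lambda>_. lborel_01))
      = (\<integral>\<^sup>+u. \<integral>\<^sup>+y. ennreal (?P u) * (ennreal (?p u) *
            f (gbm_step mu sig dt (Su S0 B mu sig dt u n) (Phi_inv (?p u * y)))) \<partial>lborel_01
          \<partial>PiM {1..n} (\<lambda>_. lborel_01))"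
    by (subst lborel_01_product.product_nn_integral_insert[OF _ _ meas])
      (auto intro!: nn_integral_cong simp: Su_upd Su_Suc_gbm_step p_u_def ennreal_mult
        prod_nonneg less_imp_le[OF pstep_pos] mult.assoc)
  also have "\<dots> = (\<integral>\<^sup>+u. ennreal (?P u) * killed_transition B mu sig dt f (Su S0 B mu sig dt u n)
          \<partial>PiM {1..n} (\<lambda>_. lborel_01))"
  proof (intro nn_integral_cong)
    fix u
    have "(\<lambda>y. ennreal (?p u) * f (gbm_step mu sig dt (Su S0 B mu sig dt u n) (Phi_inv (?p u * y))))
        \<in> borel_measurable lborel_01"
      by (intro measurable_restrict_space1) measurable
    then show "(\<integral>\<^sup>+y. ennreal (?P u) * (ennreal (?p u) *
            f (gbm_step mu sig dt (Su S0 B mu sig dt u n) (Phi_inv (?p u * y)))) \<partial>lborel_01)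
        = ennreal (?P u) * killed_transition B mu sig dt f (Su S0 B mu sig dt u n)"
      using assms Su_pos[of S0 B mu sig dt u n]
      by (simp add: nn_integral_cmult nn_integral_lborel_01_eq_killed_transition)
  qed
  finally show ?thesis by (simp add: atLeastAtMostSuc_conv insert_commute)
qed

lemma nn_integral_knock_out_Spath_Suc:
  assumes [measurable]: "f \<in> borel_measurable borel"
  shows "(\<integral>\<^sup>+z. knock_out B n (Spath S0 mu sig dt z)
              (killed_transition B mu sig dt f (Spath S0 mu sig dt z n)) \<partial>PiM {0..<n} (\<lambda>_. std_normal))
       = (\<integral>\<^sup>+z. knock_out B (Suc n) (Spath S0 mu sig dt z) (f (Spath S0 mu sig dt z (Suc n)))
            \<partial>PiM {0..<Suc n} (\<lambda>_. std_normal))"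
proof -
  have [measurable]: "(\<lambda>z. Spath S0 mu sig dt z (Suc n)) \<in> borel_measurable (PiM {0..<Suc n} (\<lambda>_. std_normal))"
    by (simp add: measurable_Spath)
  have "(\<lambda>z. knock_out B (Suc n) (Spath S0 mu sig dt z) (f (Spath S0 mu sig dt z (Suc n))))
      \<in> borel_measurable (PiM {0..<Suc n} (\<lambda>_. std_normal))"
    by measurable
  then have meas: "(\<lambda>z. knock_out B (Suc n) (Spath S0 mu sig dt z) (f (Spath S0 mu sig dt z (Suc n))))
      \<in> borel_measurable (PiM (insert n {0..<n}) (\<lambda>_. std_normal))"
    by (simp add: atLeastLessThanSuc insert_commute)
  have Spath_upd: "Spath S0 mu sig dt (z(n := y)) j = Spath S0 mu sig dt z j" if "j \<le> n" for z y j
    using that by (intro Spath_cong) simp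
  have "(\<integral>\<^sup>+z. knock_out B (Suc n) (Spath S0 mu sig dt z) (f (Spath S0 mu sig dt z (Suc n)))
            \<partial>PiM (insert n {0..<n}) (\<lambda>_. std_normal))
      = (\<integral>\<^sup>+z. \<integral>\<^sup>+y. knock_out B n (Spath S0 mu sig dt z)
            (if gbm_step mu sig dt (Spath S0 mu sig dt z n) y \<le> B
             then f (gbm_step mu sig dt (Spath S0 mu sig dt z n) y) else 0) \<partial>std_normal
          \<partial>PiM {0..<n} (\<lambda>_. std_normal))"
    by (subst std_normal_product.product_nn_integral_insert[OF _ _ meas])
      (auto intro!: nn_integral_cong simp: knock_out_Suc Spath_Suc_gbm_step Spath_upd
        cong: knock_out_cong)
  then show ?thesis
    by (simp add: nn_integral_knock_out killed_transition_def atLeastLessThanSuc insert_commute)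
qed

lemma nn_integral_Su_eq_knock_out_Spath:
  assumes "0 < dt" "0 < sig" "0 < S0" "0 < B" and "f \<in> borel_measurable borel"
  shows "(\<integral>\<^sup>+u. ennreal (\<Prod>t<n. p_u S0 B mu sig dt u t) * f (Su S0 B mu sig dt u n)
            \<partial>PiM {1..n} (\<lambda>_. lborel_01))
       = (\<integral>\<^sup>+z. knock_out B n (Spath S0 mu sig dt z) (f (Spath S0 mu sig dt z n))
            \<partial>PiM {0..<n} (\<lambda>_. std_normal))"
  using assms(5)
proof (induction n arbitrary: f)
  case 0
  then show ?case by (simp add: PiM_empty)
next
  case (Suc n)
  note IH = Suc.IH[OF borel_measurable_killed_transition[OF Suc.prems]]
  show ?case
    using nn_integral_Su_Suc[OF assms(1-4) Suc.prems] IH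
      nn_integral_knock_out_Spath_Suc[OF Suc.prems]
    by (simp only:)
qed

lemma integral_eq_integral_of_nn_integral_eq:
  fixes f g :: "_ \<Rightarrow> real"
  assumes "f \<in> borel_measurable M" "g \<in> borel_measurable N" "\<And>x. 0 \<le> f x" "\<And>x. 0 \<le> g x"
    and "(\<integral>\<^sup>+x. ennreal (f x) \<partial>M) = (\<integral>\<^sup>+x. ennreal (g x) \<partial>N)"
  shows "(\<integral>x. f x \<partial>M) = (\<integral>x. g x \<partial>N)"
  using assms by (simp add: integral_eq_nn_integral)

lemma integral_Su_eq_integral_Spath:
  assumes "0 < dt" "0 < sig" "0 < S0" "0 < B"
    and [measurable]: "g \<in> borel_measurable borel" and "\<And>x. 0 \<le> g x"
  shows "(\<integral>u. (\<Prod>t<n. p_u S0 B mu sig dt u t) * g (Su S0 B mu sig dt u n)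
            \<partial>PiM {1..n} (\<lambda>_. lborel_01))
       = (\<integral>z. knock_out B n (Spath S0 mu sig dt z) (g (Spath S0 mu sig dt z n))
            \<partial>PiM {0..<n} (\<lambda>_. std_normal))"
proof (rule integral_eq_integral_of_nn_integral_eq)
  show "(\<lambda>u. (\<Prod>t<n. p_u S0 B mu sig dt u t) * g (Su S0 B mu sig dt u n))
      \<in> borel_measurable (PiM {1..n} (\<lambda>_. lborel_01))"
    using borel_measurable_prod_p_u[of n n] measurable_Su[of n n] by measurable
  show "(\<lambda>z. knock_out B n (Spath S0 mu sig dt z) (g (Spath S0 mu sig dt z n)))
      \<in> borel_measurable (PiM {0..<n} (\<lambda>_. std_normal))"
    using measurable_Spath[of n n] by measurable
  have p_u_nonneg: "0 \<le> (\<Prod>t<n. p_u S0 B mu sig dt u t)" for u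
    by (simp add: p_u_def prod_nonneg less_imp_le[OF pstep_pos])
  then show "0 \<le> (\<Prod>t<n. p_u S0 B mu sig dt u t) * g (Su S0 B mu sig dt u n)" for u
    using assms(6) by simp
  show "0 \<le> knock_out B n (Spath S0 mu sig dt z) (g (Spath S0 mu sig dt z n))" for z
    using assms(6) by (simp add: knock_out_def)
  show "(\<integral>\<^sup>+u. ennreal ((\<Prod>t<n. p_u S0 B mu sig dt u t) * g (Su S0 B mu sig dt u n))
            \<partial>PiM {1..n} (\<lambda>_. lborel_01))
      = (\<integral>\<^sup>+z. ennreal (knock_out B n (Spath S0 mu sig dt z) (g (Spath S0 mu sig dt z n)))
            \<partial>PiM {0..<n} (\<lambda>_. std_normal))"
    using nn_integral_Su_eq_knock_out_Spath[OF assms(1-4), of "\<lambda>x. ennreal (g x)" n mu]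
    by (simp add: ennreal_mult p_u_nonneg assms(6) ennreal_knock_out)
qed

theorem theorem2p4:
  fixes M :: "'a measure" and Z :: "nat \<Rightarrow> 'a \<Rightarrow> real"
    and T :: nat and dt r mu sig S0 B K :: real
  assumes "dt > 0" and "sig > 0" and "S0 > 0" and "B > 0"
    and "prob_space M"
    and "prob_space.indep_vars M (\<lambda>_. borel) Z {0..<T}"
    and "\<And>j. j < T \<Longrightarrow> distributed M lborel (Z j) (\<lambda>x. ennreal (std_normal_density x))"
  shows "exp (- r * real T * dt) *
           (\<integral>\<omega>. barrier_payoff K B T (Spath S0 mu sig dt (\<lambda>j. Z j \<omega>)) \<partial>M)
       = exp (- r * real T * dt) *
           (\<integral>u. (\<Prod>t<T. p_u S0 B mu sig dt u t) * q_call K (Su S0 B mu sig dt u T)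
              \<partial>(PiM {1..T} (\<lambda>_. restrict_space lborel {0..1})))"
proof -
  interpret M: prob_space M by fact
  have [measurable]: "q_call K \<in> borel_measurable borel"
    unfolding q_call_def by measurable
  have [measurable]: "(\<lambda>z. Spath S0 mu sig dt z T) \<in> borel_measurable (PiM {0..<T} (\<lambda>_. std_normal))"
    by (simp add: measurable_Spath)
  have "(\<integral>\<omega>. barrier_payoff K B T (Spath S0 mu sig dt (\<lambda>j. Z j \<omega>)) \<partial>M)
      = (\<integral>\<omega>. barrier_payoff K B T (Spath S0 mu sig dt (\<lambda>j\<in>{0..<T}. Z j \<omega>)) \<partial>M)"
    by (auto simp: barrier_payoff_def intro!: Bochner_Integration.integral_cong Spath_cong
        cong: Spath_cong)
  also have "\<dots> = (\<integral>z. knock_out B T (Spath S0 mu sig dt z) (q_call K (Spath S0 mu sig dt z T))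
              \<partial>PiM {0..<T} (\<lambda>_. std_normal))"
    using assms(6,7) unfolding barrier_payoff_eq_knock_out std_normal_def
    by (intro M.integral_indep_vars_PiM_density) (simp_all add: std_normal_def[symmetric])
  also have "\<dots> = (\<integral>u. (\<Prod>t<T. p_u S0 B mu sig dt u t) * q_call K (Su S0 B mu sig dt u T)
              \<partial>(PiM {1..T} (\<lambda>_. lborel_01)))"
    using assms(1-4) by (intro integral_Su_eq_integral_Spath[symmetric]) (auto simp: q_call_def)
  finally show ?thesis by simp
qed

end
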